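(* Under the standing setup, for all $t\ge0$ and $u_0\in\mathbb R^d$, $\mathscr S(t)u_0=\sup_{\pi\in P_t}\mathcal E_\pi u_0=\sup_{\theta\in Q_t}S_\theta u_0.$
   Context: Standing setup: $d\in\mathbb N$; vectors in $\mathbb R^d$; inequalities and suprema of vectors are componentwise; reals are identified with constant vectors. A $Q$-matrix is $q\in\mathbb R^{d\times d}$ with $q_{ii}\le0$, $q_{ij}\ge0$ ($i\ne j$), $\sum_jq_{ij}=0$. Let $\mathcal P$ be a set of $Q$-matrices and $f=(f_q)_{q\in\mathcal P}\subset\mathbb R^d$ with $\sup_{q\in\mathcal P}f_q=f_{q_0}=0$ for some $q_0\in\mathcal P$, such that $\mathcal Qu:=\sup_{q\in\mathcal P}(qu+f_q)$ is finite for every $u\in\mathbb R^d$. For $q\in\mathcal P$, $t\ge0$: $S_q(t)u_0:=e^{tq}u_0+\int_0^te^{sq}f_q\,ds$. For $h\ge0$: $\mathcal E_hu_0:=\sup_{q\in\mathcal P}S_q(h)u_0$. $P$ is the set of finite subsets $\pi\subset[0,\infty)$ with $0\in\pi$; $P_t:=\{\pi\in P:\max\pi=t\}$. For $\pi=\{t_0,\dots,t_m\}$ with $0=t_0<\dots<t_m$, $m\ge1$, $\mathcal E_\pi:=\mathcal E_{t_1-t_0}\circ\cdots\circ\mathcal E_{t_m-t_{m-1}}$, and $\mathcal E_{\{0\}}:=\mathcal E_0$. The Nisio semigroup of $(\mathcal P,f)$ is $\mathscr S(t)u_0:=\sup_{\pi\in P_t}\mathcal E_\pi u_0$. For $\mathbf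 q=(q^1,\dots,q^d)\in\mathcal P^d$ and $t\ge0$, define the affine map $S_{\mathbf q}(t)\colon\mathbb R^d\to\mathbb R^d$ by $(S_{\mathbf q}(t)u_0)_i:=(S_{q^i}(t)u_0)_i$ for $i=1,\dots,d$. Let $Q_t:=\{(\mathbf q_k,h_k)_{k=1,\dots,m}\in(\mathcal P^d\times[0,t])^m : m\in\mathbb N,\ \sum_{k=1}^mh_k=t\}$, and for $\theta=(\mathbf q_k,h_k)_{k=1,\dots,m}\in Q_t$ set $S_\theta u_0:=S_{\mathbf q_1}(h_1)\circ\cdots\circ S_{\mathbf q_m}(h_m)u_0$. *)

theory Defs
  imports "HOL-Analysis.Analysis"
begin

text \<open>Dimension d is the cardinality of the finite index type 'n; vectors in R^d
  are real^'n, d x d matrices are real^'n^'n (row index first).\<close>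

primrec matpow :: "real^'n^'n \<Rightarrow> nat \<Rightarrow> real^'n^'n" where
  "matpow A 0 = mat 1"
| "matpow A (Suc k) = A ** matpow A k"

definition mexp :: "real^'n^'n \<Rightarrow> real^'n^'n" where
  "mexp A = (\<Sum>k. (1 / fact k) *\<^sub>R matpow A k)"

definition is_Qmatrix :: "real^'n^'n \<Rightarrow> bool" where
  "is_Qmatrix q \<longleftrightarrow> (\<forall>i. q$i$i \<le> 0) \<and> (\<forall>i j. i \<noteq> j \<longrightarrow> q$i$j \<ge> 0)
     \<and> (\<forall>i. (\<Sum>j\<in>UNIV. q$i$j) = 0)"

definition vsup :: "(real^'n) set \<Rightarrow> real^'n" where
  "vsup A = (\<chi> i. Sup ((\<lambda>v. v$i) ` A))"

definition Ssg :: "real^'n^'n \<Rightarrow> real^'n \<Rightarrow> real \<Rightarrow> real^'n \<Rightarrow> real^'n" where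
  "Ssg q fq t u0 = mexp (t *\<^sub>R q) *v u0 + integral {0..t} (\<lambda>s. mexp (s *\<^sub>R q) *v fq)"

definition Eop :: "(real^'n^'n) set \<Rightarrow> (real^'n^'n \<Rightarrow> real^'n) \<Rightarrow> real \<Rightarrow> real^'n \<Rightarrow> real^'n" where
  "Eop P f h u0 = vsup ((\<lambda>q. Ssg q (f q) h u0) ` P)"

definition Parts :: "real \<Rightarrow> real set set" where
  "Parts t = {\<pi>. finite \<pi> \<and> \<pi> \<subseteq> {0..} \<and> 0 \<in> \<pi> \<and> Max \<pi> = t}"

definition increments :: "real list \<Rightarrow> real list" where
  "increments ts = map (\<lambda>(a, b). b - a) (zip ts (tl ts))"

definition Epart :: "(real^'n^'n) set \<Rightarrow> (real^'n^'n \<Rightarrow> real^'n) \<Rightarrow> real set \<Rightarrow> real^'n \<Rightarrow> real^'n" where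
  "Epart P f \<pi> u0 =
     (if \<pi> = {0} then Eop P f 0 u0
      else foldr (\<lambda>h v. Eop P f h v) (increments (sorted_list_of_set \<pi>)) u0)"

definition Nisio :: "(real^'n^'n) set \<Rightarrow> (real^'n^'n \<Rightarrow> real^'n) \<Rightarrow> real \<Rightarrow> real^'n \<Rightarrow> real^'n" where
  "Nisio P f t u0 = vsup ((\<lambda>\<pi>. Epart P f \<pi> u0) ` Parts t)"

definition Svec :: "('n \<Rightarrow> real^'n^'n) \<Rightarrow> (real^'n^'n \<Rightarrow> real^'n) \<Rightarrow> real \<Rightarrow> real^'n \<Rightarrow> real^'n" where
  "Svec qs f t u0 = (\<chi> i. (Ssg (qs i) (f (qs i)) t u0) $ i)"

definition Qseqs :: "(real^'n^'n) set \<Rightarrow> real \<Rightarrow> (('n \<Rightarrow> real^'n^'n) \<times> real) list set" where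
  "Qseqs P t = {\<theta>. \<theta> \<noteq> [] \<and> (\<forall>(qs, h) \<in> set \<theta>. (\<forall>i. qs i \<in> P) \<and> h \<in> {0..t})
                   \<and> sum_list (map snd \<theta>) = t}"

definition Sseq :: "(real^'n^'n \<Rightarrow> real^'n) \<Rightarrow> (('n \<Rightarrow> real^'n^'n) \<times> real) list \<Rightarrow> real^'n \<Rightarrow> real^'n" where
  "Sseq f \<theta> u0 = foldr (\<lambda>(qs, h) v. Svec qs f h v) \<theta> u0"

end

theory Submission
  imports Defs
begin

text \<open>
  For a Q-matrix \<open>q\<close> and \<open>h \<ge> 0\<close> the matrix \<open>exp (h q)\<close> is nonnegative with unit row sums;
  nonnegativity comes from \<open>exp (h q) = exp (-h c) exp (h (q + c I))\<close> with \<open>q + c I \<ge> 0\<close>.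
  Hence every \<open>S\<^sub>q(h)\<close>, and with it every \<open>\<E>\<^sub>h\<close> and every \<open>S\<^sub>\<theta>\<close>, is monotone, commutes with
  adding constant vectors and, as \<open>f\<^sub>q \<le> 0\<close>, maps vectors below a constant \<open>c\<close> below \<open>c\<close>.
  Monotonicity alone bounds \<open>S\<^sub>\<theta> u\<^sub>0\<close> by \<open>\<E>\<^sub>\<pi> u\<^sub>0\<close>, where \<open>\<pi>\<close> consists of the partial sums
  of the step sizes of \<open>\<theta>\<close>. Conversely, choosing in every step of \<open>\<E>\<^sub>\<pi>\<close> and for every
  coordinate an \<open>\<epsilon>\<close>-optimal matrix, monotonicity and translation invariance propagate the
  errors additively, which yields a \<open>\<theta>\<close> with \<open>S\<^sub>\<theta> u\<^sub>0 \<ge> \<E>\<^sub>\<pi> u\<^sub>0 - \<epsilon>\<close>.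
\<close>

section \<open>The matrix exponential\<close>

lemma matpow_entry_bound:
  fixes A :: "real^'n^'n"
  assumes "\<And>i j. \<bar>A$i$j\<bar> \<le> m"
  shows "\<bar>matpow A k $ i $ j\<bar> \<le> (real CARD('n) * m)^k"
proof (induction k arbitrary: i j)
  case 0
  show ?case by (simp add: mat_def)
next
  case (Suc k)
  have "0 \<le> m"
    using assms by (meson abs_ge_zero order_trans)
  have "\<bar>matpow A (Suc k) $i$j\<bar> \<le> (\<Sum>l\<in>UNIV. \<bar>A$i$l\<bar> * \<bar>matpow A k $l$j\<bar>)"
    by (simp add: matrix_matrix_mult_def sum_abs flip: abs_mult)
  also have "\<dots> \<le> (\<Sum>l\<in>(UNIV::'n set). m * (real CARD('n) * m)^k)"
    by (intro sum_mono mult_mono) (use assms Suc \<open>0 \<le> m\<close> in auto)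
  finally show ?case by simp
qed

lemma summable_matpow_entry:
  fixes A :: "real^'n^'n"
  shows "summable (\<lambda>k. \<bar>matpow A k $ i $ j / fact k\<bar>)"
proof -
  define m where "m = (\<Sum>i\<in>UNIV. \<Sum>j\<in>UNIV. \<bar>A$i$j\<bar>)"
  have bound: "\<bar>A$i$j\<bar> \<le> m" for i j
  proof -
    have "\<bar>A$i$j\<bar> \<le> (\<Sum>j\<in>UNIV. \<bar>A$i$j\<bar>)"
      by (rule member_le_sum) auto
    also have "\<dots> \<le> m" unfolding m_def
      by (rule member_le_sum[where f="\<lambda>i. \<Sum>j\<in>UNIV. \<bar>A$i$j\<bar>"]) (auto intro: sum_nonneg)
    finally show ?thesis .
  qed
  then have "norm \<bar>matpow A k $ i $ j / fact k\<bar> \<le> inverse (fact k) * (real CARD('n) * m) ^ k" for k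
    using matpow_entry_bound[OF bound]
    by (simp add: divide_inverse_commute abs_mult mult_left_mono)
  then show ?thesis
    by (rule summable_comparison_test'[OF summable_exp])
qed

lemma mexp_entry_sums:
  fixes A :: "real^'n^'n"
  shows "(\<lambda>k. matpow A k $ i $ j / fact k) sums (mexp A $ i $ j)"
proof -
  have entry_sums: "(\<lambda>k. matpow A k $ i $ j / fact k) sums (\<Sum>k. matpow A k $ i $ j / fact k)"
    for i j using summable_rabs_cancel[OF summable_matpow_entry] by (rule summable_sums)
  define M :: "real^'n^'n" where "M = (\<chi> i j. \<Sum>k. matpow A k $ i $ j / fact k)"
  have "(\<lambda>k. (1 / fact k) *\<^sub>R matpow A k) sums M"
    unfolding sums_def
  proof (intro vec_tendstoI)
    fix i j
    have "(\<Sum>k<n. (1 / fact k) *\<^sub>R matpow A k) $ i $ j = (\<Sum>k<n. matpow A k $ i $ j / fact k)" for n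
      by (simp add: sum_component)
    then show "(\<lambda>n. (\<Sum>k<n. (1 / fact k) *\<^sub>R matpow A k) $ i $ j) \<longlonglongrightarrow> M $ i $ j"
      using entry_sums[of i j] by (simp add: M_def sums_def)
  qed
  then have "mexp A = M"
    unfolding mexp_def by (rule sums_unique[symmetric])
  then show ?thesis
    using entry_sums by (simp add: M_def)
qed

lemma mexp_zero: "mexp (0::real^'n^'n) = mat 1"
proof -
  have "(\<lambda>k. (1 / fact k) *\<^sub>R matpow (0::real^'n^'n) k) = (\<lambda>k. if k = 0 then mat 1 else 0)"
    by (rule ext) (case_tac k, auto)
  then show ?thesis
    unfolding mexp_def using sums_unique[OF sums_single[of 0 "\<lambda>_. mat 1::real^'n^'n"]] by simp
qed

lemma mexp_fixes_kernel_vector: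
  fixes B :: "real^'n^'n"
  assumes "B *v v = 0"
  shows "mexp B *v v = v"
proof -
  have pow: "matpow B k *v v = (if k = 0 then v else 0)" for k
    by (induction k) (simp_all flip: matrix_vector_mul_assoc add: assms)
  have "(mexp B *v v) $ i = v $ i" for i
  proof -
    have "(\<lambda>k. \<Sum>j\<in>UNIV. matpow B k $ i $ j / fact k * v $ j) sums (mexp B *v v) $ i"
      unfolding matrix_vector_mult_def vec_lambda_beta
      by (intro sums_sum sums_mult2 mexp_entry_sums)
    moreover have "(\<lambda>k. \<Sum>j\<in>UNIV. matpow B k $ i $ j / fact k * v $ j)
        = (\<lambda>k. if k = 0 then v $ i else 0)"
    proof
      fix k
      have "(\<Sum>j\<in>UNIV. matpow B k $ i $ j / fact k * v $ j) = (matpow B k *v v) $ i / fact k"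
        by (simp add: matrix_vector_mult_def sum_divide_distrib)
      then show "(\<Sum>j\<in>UNIV. matpow B k $ i $ j / fact k * v $ j) = (if k = 0 then v $ i else 0)"
        by (simp add: pow)
    qed
    ultimately show ?thesis
      using sums_single[of 0 "\<lambda>_. v $ i"] sums_unique2 by fastforce
  qed
  then show ?thesis by (simp add: vec_eq_iff)
qed

lemma sum_binomial_Suc_scaleR:
  fixes M :: "nat \<Rightarrow> 'a::real_vector"
  shows "(\<Sum>j\<le>Suc k. (real (Suc k choose j) * a^(Suc k - j)) *\<^sub>R M j)
     = (\<Sum>j\<le>k. (real (k choose j) * a^(k-j)) *\<^sub>R M (Suc j))
       + a *\<^sub>R (\<Sum>j\<le>k. (real (k choose j) * a^(k-j)) *\<^sub>R M j)"
proof -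
  have 1: "(\<Sum>j\<le>Suc k. (real (Suc k choose j) * a^(Suc k - j)) *\<^sub>R M j)
      = a^(Suc k) *\<^sub>R M 0 + (\<Sum>j\<le>k. (real (k choose j) * a^(k - j)) *\<^sub>R M (Suc j))
       + (\<Sum>j\<le>k. (real (k choose Suc j) * a^(k - j)) *\<^sub>R M (Suc j))"
    by (subst sum.atMost_Suc_shift) (simp add: distrib_right scaleR_add_left sum.distrib)
  have 2: "(\<Sum>j\<le>k. (real (k choose Suc j) * a^(k - j)) *\<^sub>R M (Suc j))
       = (\<Sum>j<k. (real (k choose Suc j) * a^(k - j)) *\<^sub>R M (Suc j))"
    by (simp add: lessThan_Suc_atMost[symmetric])
  have 3: "a *\<^sub>R (\<Sum>j\<le>k. (real (k choose j) * a^(k-j)) *\<^sub>R M j)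
      = (\<Sum>j\<le>k. (real (k choose j) * a^(Suc k-j)) *\<^sub>R M j)"
    by (auto simp: scaleR_sum_right Suc_diff_le mult_ac intro!: sum.cong)
  have 4: "(\<Sum>j\<le>k. (real (k choose j) * a^(Suc k-j)) *\<^sub>R M j)
      = a^(Suc k) *\<^sub>R M 0 + (\<Sum>j<k. (real (k choose Suc j) * a^(k - j)) *\<^sub>R M (Suc j))"
    by (auto simp: sum.atMost_shift Suc_diff_le Suc_diff_Suc intro!: sum.cong simp flip: power_Suc)
  show ?thesis unfolding 1 2 3 4 by (simp add: algebra_simps)
qed

lemma matrix_mult_sum_right:
  fixes X :: "real^'n^'n"
  shows "X ** sum g S = (\<Sum>j\<in>S. X ** g j)"
  by (induction S rule: infinite_finite_induct) (auto simp: matrix_add_ldistrib)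

lemma matrix_add_rdistrib:
  fixes A B C :: "real^'n^'n"
  shows "(A + B) ** C = A ** C + B ** C"
  by (simp add: matrix_matrix_mult_def vec_eq_iff distrib_right sum.distrib)

lemma matpow_add_scalar:
  fixes X :: "real^'n^'n"
  shows "matpow (X + a *\<^sub>R mat 1) k = (\<Sum>j\<le>k. (real (k choose j) * a^(k-j)) *\<^sub>R matpow X j)"
proof (induction k)
  case 0
  then show ?case by simp
next
  case (Suc k)
  let ?S = "(\<Sum>j\<le>k. (real (k choose j) * a^(k-j)) *\<^sub>R matpow X j)"
  have "matpow (X + a *\<^sub>R mat 1) (Suc k) = X ** ?S + a *\<^sub>R ?S"
    using Suc by (simp add: matrix_add_rdistrib scalar_matrix_assoc[symmetric])
  also have "X ** ?S = (\<Sum>j\<le>k. (real (k choose j) * a^(k-j)) *\<^sub>R matpow X (Suc j))"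
    by (simp add: matrix_mult_sum_right matrix_scalar_ac scalar_matrix_assoc[symmetric])
  finally show ?case by (simp only: sum_binomial_Suc_scaleR)
qed

lemma mexp_add_scalar:
  fixes X :: "real^'n^'n"
  shows "mexp (X + a *\<^sub>R mat 1) $ i $ j = mexp X $ i $ j * exp a"
proof -
  let ?x = "\<lambda>l. matpow X l $ i $ j / fact l"
  let ?y = "\<lambda>m. a^m / fact m"
  have "summable (\<lambda>k. norm (?x k))"
    using summable_matpow_entry[of X i j] by simp
  moreover have "summable (\<lambda>k. norm (?y k))"
    using summable_exp[of "\<bar>a\<bar>"] by (simp add: abs_mult power_abs divide_inverse mult.commute)
  ultimately have Cauchy: "(\<lambda>k. \<Sum>l\<le>k. ?x l * ?y (k - l)) sums ((\<Sum>k. ?x k) * (\<Sum>k. ?y k))"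
    by (rule Cauchy_product_sums)
  have binomial: "matpow (X + a *\<^sub>R mat 1) k $ i $ j / fact k = (\<Sum>l\<le>k. ?x l * ?y (k - l))" for k
  proof -
    have summand: "real (k choose l) * a^(k-l) * matpow X l $ i $ j / fact k = ?x l * ?y (k - l)"
      if "l \<le> k" for l
    proof -
      have "real (k choose l) = fact k / (fact l * fact (k - l))"
        using binomial_fact[OF that] by simp
      then show ?thesis by (simp add: field_simps)
    qed
    have "matpow (X + a *\<^sub>R mat 1) k $ i $ j / fact k
        = (\<Sum>l\<le>k. real (k choose l) * a^(k-l) * matpow X l $ i $ j / fact k)"
      by (simp add: matpow_add_scalar sum_component sum_divide_distrib)
    also have "\<dots> = (\<Sum>l\<le>k. ?x l * ?y (k - l))"
      by (intro sum.cong refl summand) simp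
    finally show ?thesis .
  qed
  have "(\<lambda>k. matpow (X + a *\<^sub>R mat 1) k $ i $ j / fact k) sums ((\<Sum>k. ?x k) * (\<Sum>k. ?y k))"
    unfolding binomial by (rule Cauchy)
  also have "(\<Sum>k. ?x k) = mexp X $ i $ j"
    by (rule sums_unique[OF mexp_entry_sums, symmetric])
  also have "(\<Sum>k. ?y k) = exp a"
    by (simp add: exp_def divide_inverse mult.commute)
  finally show ?thesis
    using mexp_entry_sums sums_unique2 by blast
qed

lemma matpow_nonneg:
  fixes X :: "real^'n^'n"
  assumes "\<And>i j. 0 \<le> X$i$j"
  shows "0 \<le> matpow X k $ i $ j"
  by (induction k arbitrary: i j) (auto simp: mat_def matrix_matrix_mult_def assms intro!: sum_nonneg)

lemma mexp_nonneg_if_offdiag_nonneg: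
  fixes A :: "real^'n^'n"
  assumes "\<And>i j. i \<noteq> j \<Longrightarrow> 0 \<le> A$i$j"
  shows "0 \<le> mexp A $ i $ j"
proof -
  define c where "c = (\<Sum>i\<in>UNIV. \<bar>A$i$i\<bar>)"
  have diag: "- A$i$i \<le> c" for i
  proof -
    have "\<bar>A$i$i\<bar> \<le> c"
      unfolding c_def by (rule member_le_sum) auto
    then show ?thesis by linarith
  qed
  have nonneg: "0 \<le> (A + c *\<^sub>R mat 1) $ i $ j" for i j
    using assms diag[of i] by (cases "i = j") (simp_all add: mat_def)
  have "0 \<le> mexp (A + c *\<^sub>R mat 1) $ i $ j"
    by (rule sums_le[OF _ sums_zero mexp_entry_sums]) (simp add: matpow_nonneg[OF nonneg])
  moreover have "A = (A + c *\<^sub>R mat 1) + (- c) *\<^sub>R mat 1"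
    by simp
  ultimately show ?thesis
    by (metis mexp_add_scalar exp_ge_zero mult_nonneg_nonneg)
qed

section \<open>The affine semigroups of Q-matrices\<close>

lemma matrix_vector_mult_mono:
  fixes M :: "real^'n^'m"
  assumes "\<And>i j. 0 \<le> M$i$j" "u \<le> v"
  shows "M *v u \<le> M *v v"
  using assms by (auto simp: less_eq_vec_def matrix_vector_mult_def intro!: sum_mono mult_left_mono)

lemma integral_nonpos_cart:
  fixes g :: "'a::euclidean_space \<Rightarrow> real^'n"
  assumes "\<And>x. x \<in> S \<Longrightarrow> g x \<le> 0"
  shows "integral S g \<le> 0"
proof (cases "g integrable_on S")
  case True
  have "integral S g \<bullet> axis i 1 \<le> (0::real^'n) \<bullet> axis i 1" for i
    using assms by (intro has_integral_component_le[OF _ integrable_integral[OF True] has_integral_0])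
      (auto simp: axis_in_Basis_iff inner_axis less_eq_vec_def)
  then show ?thesis
    by (simp add: inner_axis less_eq_vec_def)
qed (simp add: not_integrable_integral)

lemma Qmatrix_mult_const: "is_Qmatrix q \<Longrightarrow> q *v vec c = 0"
  unfolding is_Qmatrix_def
  by (simp add: matrix_vector_mult_def vec_eq_iff flip: sum_distrib_right)

lemma mexp_Qmatrix_const:
  assumes "is_Qmatrix q"
  shows "mexp (h *\<^sub>R q) *v vec c = vec c"
proof (rule mexp_fixes_kernel_vector)
  have "(h *\<^sub>R q) *v vec c = h *\<^sub>R (q *v vec c)"
    by (simp add: matrix_vector_mult_def vec_eq_iff sum_distrib_left mult_ac)
  then show "(h *\<^sub>R q) *v vec c = 0"
    using Qmatrix_mult_const[OF assms] by simp
qed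

lemma mexp_Qmatrix_nonneg: "is_Qmatrix q \<Longrightarrow> 0 \<le> h \<Longrightarrow> 0 \<le> mexp (h *\<^sub>R q) $ i $ j"
  by (rule mexp_nonneg_if_offdiag_nonneg) (auto simp: is_Qmatrix_def)

lemma Ssg_mono:
  assumes "is_Qmatrix q" "0 \<le> h" "u \<le> v"
  shows "Ssg q fq h u \<le> Ssg q fq h v"
  unfolding Ssg_def using assms by (intro add_right_mono matrix_vector_mult_mono mexp_Qmatrix_nonneg)

lemma Ssg_add_const: "is_Qmatrix q \<Longrightarrow> Ssg q fq h (u + vec c) = Ssg q fq h u + vec c"
  by (simp add: Ssg_def matrix_vector_right_distrib mexp_Qmatrix_const)

lemma Ssg_le_const:
  assumes "is_Qmatrix q" "0 \<le> h" "fq \<le> 0" "u \<le> vec c"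
  shows "Ssg q fq h u \<le> vec c"
proof -
  have "integral {0..h} (\<lambda>s. mexp (s *\<^sub>R q) *v fq) \<le> 0"
    using matrix_vector_mult_mono[OF mexp_Qmatrix_nonneg[OF assms(1)] assms(3)]
    by (intro integral_nonpos_cart) simp
  then have "Ssg q fq h (vec c) \<le> vec c"
    by (simp add: Ssg_def mexp_Qmatrix_const[OF assms(1)])
  then show ?thesis
    using Ssg_mono[OF assms(1,2,4)] by (rule order_trans[rotated])
qed

lemma Ssg_zero: "Ssg q fq 0 u = u"
  by (simp add: Ssg_def mexp_zero)

section \<open>Partitions and step sizes\<close>

lemma increments_Nil [simp]: "increments [] = []"
  and increments_single [simp]: "increments [a] = []"
  and increments_Cons_Cons [simp]: "increments (a # b # L) = (b - a) # increments (b # L)"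
  by (simp_all add: increments_def)

lemma increments_map_add: "increments (map ((+) h) L) = increments L"
  by (induction L rule: induct_list012) auto

lemma sum_list_increments: "sum_list (increments (a # L)) = last (a # L) - a"
  by (induction L arbitrary: a) auto

lemma increments_sorted_bounds:
  assumes "sorted L" "set L \<subseteq> {0..t}" "x \<in> set (increments L)"
  shows "0 \<le> x \<and> x \<le> t"
  using assms by (induction L rule: induct_list012) auto

lemma sorted_le_last: "sorted L \<Longrightarrow> x \<in> set L \<Longrightarrow> x \<le> last L"
  by (induction L rule: induct_list012) auto

lemma last_sorted_list_of_set:
  assumes "finite A" "A \<noteq> {}"
  shows "last (sorted_list_of_set A) = Max A"
proof (rule antisym)
  show "last (sorted_list_of_set A) \<le> Max A"
    using assms last_in_set[of "sorted_list_of_set A"] by (intro Max_ge) auto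
  show "Max A \<le> last (sorted_list_of_set A)"
    using assms by (intro sorted_le_last) auto
qed

lemma sorted_list_of_Parts:
  assumes "\<pi> \<in> Parts t"
  obtains L where "sorted_list_of_set \<pi> = 0 # L" "last (0 # L) = t" "set (0 # L) \<subseteq> {0..t}"
proof
  have fin: "finite \<pi>" and nonneg: "\<pi> \<subseteq> {0..}" and zero: "0 \<in> \<pi>" and max: "Max \<pi> = t"
    using assms by (auto simp: Parts_def)
  have "Min \<pi> = 0"
    using fin nonneg zero by (intro Min_eqI) auto
  then show "sorted_list_of_set \<pi> = 0 # sorted_list_of_set (\<pi> - {0})"
    using sorted_list_of_set_nonempty[OF fin] zero by auto
  then show "last (0 # sorted_list_of_set (\<pi> - {0})) = t"
    using last_sorted_list_of_set[OF fin] zero max by (metis empty_iff)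
  show "set (0 # sorted_list_of_set (\<pi> - {0})) \<subseteq> {0..t}"
    using fin nonneg max Max_ge[OF fin zero] by auto
qed

lemma increments_Parts:
  assumes "\<pi> \<in> Parts t"
  shows "set (increments (sorted_list_of_set \<pi>)) \<subseteq> {0..t}"
    and "sum_list (increments (sorted_list_of_set \<pi>)) = t"
proof -
  obtain L where L: "sorted_list_of_set \<pi> = 0 # L" "last (0 # L) = t" "set (0 # L) \<subseteq> {0..t}"
    using sorted_list_of_Parts[OF assms] .
  show "set (increments (sorted_list_of_set \<pi>)) \<subseteq> {0..t}"
    using increments_sorted_bounds[of "0 # L" t] L by (metis atLeastAtMost_iff sorted_sorted_list_of_set subsetI)
  show "sum_list (increments (sorted_list_of_set \<pi>)) = t"
    using L sum_list_increments by simp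
qed

lemma Parts_shift:
  assumes "\<pi> \<in> Parts s" "0 < h"
  shows "insert 0 ((+) h ` \<pi>) \<in> Parts (h + s)"
    and "sorted_list_of_set (insert 0 ((+) h ` \<pi>)) = 0 # map ((+) h) (sorted_list_of_set \<pi>)"
proof -
  have fin: "finite \<pi>" and nonneg: "\<pi> \<subseteq> {0..}" and zero: "0 \<in> \<pi>" and max: "Max \<pi> = s"
    using assms by (auto simp: Parts_def)
  have "\<pi> \<noteq> {}"
    using zero by auto
  then have "Max ((+) h ` \<pi>) = h + s"
    using mono_Max_commute[of "(+) h" \<pi>] fin max by (simp add: mono_def)
  moreover have "0 \<le> s"
    using max zero fin by (metis Max_ge)
  ultimately have "Max (insert 0 ((+) h ` \<pi>)) = h + s"
    using fin zero assms(2) by (subst Max_insert) auto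
  then show "insert 0 ((+) h ` \<pi>) \<in> Parts (h + s)"
    using fin nonneg assms(2) by (auto simp: Parts_def)
  have "sorted_wrt (<) (0 # map ((+) h) (sorted_list_of_set \<pi>))"
    using fin nonneg assms(2) by (force simp: sorted_wrt_map)
  then show "sorted_list_of_set (insert 0 ((+) h ` \<pi>)) = 0 # map ((+) h) (sorted_list_of_set \<pi>)"
    using fin by (intro strict_sorted_equal)
      (simp_all del: sorted_list_of_set.sorted_key_list_of_set_insert_remove)
qed

lemma foldr_eq_foldr_Parts:
  fixes F :: "real \<Rightarrow> 'a \<Rightarrow> 'a"
  assumes "F 0 = id" "\<forall>h\<in>set hs. 0 \<le> h"
  shows "\<exists>\<pi>\<in>Parts (sum_list hs). foldr F hs = foldr F (increments (sorted_list_of_set \<pi>))"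
  using assms(2)
proof (induction hs)
  case Nil
  have "{0} \<in> Parts 0"
    by (simp add: Parts_def)
  then show ?case by force
next
  case (Cons h hs)
  then obtain \<pi> where \<pi>: "\<pi> \<in> Parts (sum_list hs)"
    and fold: "foldr F hs = foldr F (increments (sorted_list_of_set \<pi>))"
    by auto
  show ?case
  proof (cases "h = 0")
    case True
    then show ?thesis
      using \<pi> fold assms(1) by auto
  next
    case False
    then have "0 < h"
      using Cons.prems by auto
    obtain L where L: "sorted_list_of_set \<pi> = 0 # L"
      using sorted_list_of_Parts[OF \<pi>] by blast
    have "increments (sorted_list_of_set (insert 0 ((+) h ` \<pi>)))
        = h # increments (sorted_list_of_set \<pi>)"
      using Parts_shift(2)[OF \<pi> \<open>0 < h\<close>] L increments_map_add[of h "0 # L"] by simp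
    then show ?thesis
      using Parts_shift(1)[OF \<pi> \<open>0 < h\<close>] fold by (intro bexI[of _ "insert 0 ((+) h ` \<pi>)"]) auto
  qed
qed

section \<open>The Nisio semigroup\<close>

lemma vsup_eq_Sup: "vsup A = Sup A"
  by (simp add: vsup_def Sup_vec_def)

lemma le_vsup:
  assumes "\<And>i. bdd_above ((\<lambda>x. x $ i) ` A)" "x \<in> A"
  shows "x \<le> vsup A"
  using assms by (auto simp: less_eq_vec_def vsup_def intro: cSup_upper)

lemma le_vec_norm: "u \<le> vec (norm u)"
  for u :: "real^'n"
  by (simp add: less_eq_vec_def component_le_norm_cart[THEN abs_le_D1])

lemma cSup_eq_by_approximation:
  fixes A B :: "(real^'n) set"
  assumes "B \<noteq> {}" "bdd_above A"
    and dominated: "\<forall>b\<in>B. \<exists>a\<in>A. b \<le> a"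
    and approximated: "\<forall>a\<in>A. \<forall>e>0. \<exists>b\<in>B. a - vec e \<le> b"
  shows "Sup A = Sup B"
proof (rule antisym)
  have "bdd_above B"
    using assms(2) dominated by (meson bdd_above.I2 bdd_above_def order_trans)
  show "Sup B \<le> Sup A"
    using assms(1,2) dominated by (meson cSup_least cSup_upper order_trans)
  have "A \<noteq> {}"
    using assms(1) dominated by blast
  moreover have "a \<le> Sup B" if "a \<in> A" for a
  proof -
    have le: "a - vec e \<le> Sup B" if "0 < e" for e
      using approximated \<open>a \<in> A\<close> that \<open>bdd_above B\<close> by (meson cSup_upper order_trans)
    have "a $ i \<le> Sup B $ i + e" if "0 < e" for e i
      using le[OF that] unfolding less_eq_vec_def
      by (smt (verit) vec_component vector_minus_component)
    then show ?thesis
      by (simp add: less_eq_vec_def field_le_epsilon)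
  qed
  ultimately show "Sup A \<le> Sup B"
    by (rule cSup_least)
qed

lemma Sseq_Nil [simp]: "Sseq f [] u = u"
  and Sseq_Cons [simp]: "Sseq f ((qs, h) # \<theta>) u = Svec qs f h (Sseq f \<theta> u)"
  by (simp_all add: Sseq_def)

locale Q_control =
  fixes P :: "(real^'n^'n) set" and f :: "real^'n^'n \<Rightarrow> real^'n"
  assumes Qmatrix: "q \<in> P \<Longrightarrow> is_Qmatrix q"
    and f_nonpos: "q \<in> P \<Longrightarrow> f q \<le> 0"
    and nonempty: "P \<noteq> {}"
begin

lemma Svec_mono: "(\<And>i. qs i \<in> P) \<Longrightarrow> 0 \<le> h \<Longrightarrow> u \<le> v \<Longrightarrow> Svec qs f h u \<le> Svec qs f h v"
  using Ssg_mono[OF Qmatrix] by (auto simp: Svec_def less_eq_vec_def)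

lemma Svec_add_const: "(\<And>i. qs i \<in> P) \<Longrightarrow> Svec qs f h (u + vec c) = Svec qs f h u + vec c"
  using Ssg_add_const[OF Qmatrix] by (simp add: Svec_def vec_eq_iff)

lemma Eop_eq_Sup: "Eop P f h u = Sup ((\<lambda>q. Ssg q (f q) h u) ` P)"
  by (simp add: Eop_def vsup_eq_Sup)

lemma Eop_component: "Eop P f h u $ i = Sup ((\<lambda>q. Ssg q (f q) h u $ i) ` P)"
  by (simp add: Eop_def vsup_def image_image)

lemma bdd_above_Ssg: "0 \<le> h \<Longrightarrow> bdd_above ((\<lambda>q. Ssg q (f q) h u) ` P)"
  by (rule bdd_aboveI2[where M="vec (norm u)"]) (intro Ssg_le_const Qmatrix f_nonpos le_vec_norm)

lemma Ssg_le_Eop: "q \<in> P \<Longrightarrow> 0 \<le> h \<Longrightarrow> Ssg q (f q) h u \<le> Eop P f h u"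
  unfolding Eop_eq_Sup by (intro cSup_upper bdd_above_Ssg) auto

lemma Svec_le_Eop: "(\<And>i. qs i \<in> P) \<Longrightarrow> 0 \<le> h \<Longrightarrow> Svec qs f h u \<le> Eop P f h u"
  using Ssg_le_Eop by (auto simp: Svec_def less_eq_vec_def)

lemma Eop_le_const: "0 \<le> h \<Longrightarrow> u \<le> vec c \<Longrightarrow> Eop P f h u \<le> vec c"
  unfolding Eop_eq_Sup using nonempty
  by (auto intro!: cSup_least Ssg_le_const Qmatrix f_nonpos)

lemma Eop_mono:
  assumes "0 \<le> h" "u \<le> v"
  shows "Eop P f h u \<le> Eop P f h v"
  unfolding Eop_eq_Sup[of h u] using nonempty assms
  by (auto intro!: cSup_least order_trans[OF Ssg_mono Ssg_le_Eop] Qmatrix)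

lemma Eop_zero: "Eop P f 0 = id"
  using nonempty by (intro ext) (simp add: Eop_eq_Sup Ssg_zero image_constant_conv)

lemma Eop_approx:
  assumes "0 < e"
  obtains qs where "\<And>i. qs i \<in> P" "Eop P f h u - vec e \<le> Svec qs f h u"
proof -
  have "\<exists>q\<in>P. Eop P f h u $ i - e < Ssg q (f q) h u $ i" for i
    using less_cSupD[of "(\<lambda>q. Ssg q (f q) h u $ i) ` P"] nonempty assms
    by (auto simp: Eop_component)
  then obtain qs where qs: "\<And>i. qs i \<in> P \<and> Eop P f h u $ i - e < Ssg (qs i) (f (qs i)) h u $ i"
    by metis
  show ?thesis
  proof (rule that)
    show "qs i \<in> P" for i
      using qs by blast
    show "Eop P f h u - vec e \<le> Svec qs f h u"
      unfolding less_eq_vec_def Svec_def using qs by (simp add: less_imp_le)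
  qed
qed

lemma foldr_Eop_le_const:
  "\<forall>h\<in>set hs. 0 \<le> h \<Longrightarrow> u \<le> vec c \<Longrightarrow> foldr (Eop P f) hs u \<le> vec c"
  by (induction hs) (auto intro: Eop_le_const)

lemma Sseq_le_foldr_Eop:
  "\<forall>(qs, h)\<in>set \<theta>. (\<forall>i. qs i \<in> P) \<and> 0 \<le> h \<Longrightarrow> Sseq f \<theta> u \<le> foldr (Eop P f) (map snd \<theta>) u"
proof (induction \<theta>)
  case Nil
  then show ?case by simp
next
  case (Cons a \<theta>)
  obtain qs h where a: "a = (qs, h)" "\<forall>i. qs i \<in> P" "0 \<le> h"
    using Cons.prems by (cases a) auto
  then have "Svec qs f h (Sseq f \<theta> u) \<le> Eop P f h (Sseq f \<theta> u)"
    by (intro Svec_le_Eop) auto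
  also have "\<dots> \<le> Eop P f h (foldr (Eop P f) (map snd \<theta>) u)"
    using Cons a by (intro Eop_mono) auto
  finally show ?case
    using a by simp
qed

lemma foldr_Eop_approx:
  assumes "\<forall>h\<in>set hs. 0 \<le> h" "0 < e"
  shows "\<exists>qss. length qss = length hs \<and> (\<forall>qs\<in>set qss. \<forall>i. qs i \<in> P)
     \<and> foldr (Eop P f) hs u - vec e \<le> Sseq f (zip qss hs) u"
  using assms
proof (induction hs arbitrary: e)
  case Nil
  then show ?case by (simp add: less_eq_vec_def)
next
  case (Cons h hs)
  let ?w = "foldr (Eop P f) hs u"
  obtain qss where qss: "length qss = length hs" "\<forall>qs\<in>set qss. \<forall>i. qs i \<in> P"
    "?w - vec (e/2) \<le> Sseq f (zip qss hs) u"
    using Cons.IH[of "e/2"] Cons.prems by auto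
  obtain qs where qs: "\<And>i. qs i \<in> P" "Eop P f h ?w - vec (e/2) \<le> Svec qs f h ?w"
    using Eop_approx[of "e/2" h ?w] Cons.prems by auto
  have "0 \<le> h"
    using Cons.prems by simp
  have "Eop P f h ?w - vec e = (Eop P f h ?w - vec (e/2)) - vec (e/2)"
    by (simp add: vec_eq_iff)
  also have "\<dots> \<le> Svec qs f h ?w - vec (e/2)"
    using qs(2) by (rule diff_right_mono)
  also have "\<dots> = Svec qs f h (?w - vec (e/2))"
    using Svec_add_const[OF qs(1), where u="?w - vec (e/2)" and c="e/2"] by simp
  also have "\<dots> \<le> Svec qs f h (Sseq f (zip qss hs) u)"
    using qs(1) \<open>0 \<le> h\<close> qss(3) by (rule Svec_mono)
  finally have "Eop P f h ?w - vec e \<le> Svec qs f h (Sseq f (zip qss hs) u)" .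
  then show ?case
    using qss qs(1) by (intro exI[of _ "qs # qss"]) auto
qed

lemma Epart_eq_foldr: "Epart P f \<pi> = foldr (Eop P f) (increments (sorted_list_of_set \<pi>))"
  by (auto simp: Epart_def Eop_zero)

theorem Sup_Epart_eq_Sup_Sseq:
  assumes "0 \<le> t"
  shows "Sup ((\<lambda>\<pi>. Epart P f \<pi> u) ` Parts t) = Sup ((\<lambda>\<theta>. Sseq f \<theta> u) ` Qseqs P t)"
proof (rule cSup_eq_by_approximation)
  obtain q0 where "q0 \<in> P"
    using nonempty by blast
  then have "[(\<lambda>_. q0, t)] \<in> Qseqs P t"
    using assms by (auto simp: Qseqs_def)
  then show "(\<lambda>\<theta>. Sseq f \<theta> u) ` Qseqs P t \<noteq> {}"
    by blast
  have "Epart P f \<pi> u \<le> vec (norm u)" if "\<pi> \<in> Parts t" for \<pi>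
    using increments_Parts(1)[OF that]
    by (auto simp: Epart_eq_foldr intro!: foldr_Eop_le_const le_vec_norm)
  then show "bdd_above ((\<lambda>\<pi>. Epart P f \<pi> u) ` Parts t)"
    by (rule bdd_aboveI2)
  show "\<forall>b\<in>(\<lambda>\<theta>. Sseq f \<theta> u) ` Qseqs P t. \<exists>a\<in>(\<lambda>\<pi>. Epart P f \<pi> u) ` Parts t. b \<le> a"
  proof
    fix b assume "b \<in> (\<lambda>\<theta>. Sseq f \<theta> u) ` Qseqs P t"
    then obtain \<theta> where \<theta>: "\<theta> \<in> Qseqs P t" "b = Sseq f \<theta> u"
      by blast
    then have steps: "\<forall>(qs, h)\<in>set \<theta>. (\<forall>i. qs i \<in> P) \<and> 0 \<le> h"
      by (auto simp: Qseqs_def)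
    have "\<forall>h\<in>set (map snd \<theta>). 0 \<le> h"
      using steps by auto
    moreover have "sum_list (map snd \<theta>) = t"
      using \<theta>(1) by (simp add: Qseqs_def)
    ultimately obtain \<pi> where "\<pi> \<in> Parts t" "foldr (Eop P f) (map snd \<theta>) = Epart P f \<pi>"
      using foldr_eq_foldr_Parts[where F="Eop P f", OF Eop_zero] by (metis Epart_eq_foldr)
    then show "\<exists>a\<in>(\<lambda>\<pi>. Epart P f \<pi> u) ` Parts t. b \<le> a"
      using Sseq_le_foldr_Eop[OF steps] \<theta>(2) by auto
  qed
  show "\<forall>a\<in>(\<lambda>\<pi>. Epart P f \<pi> u) ` Parts t. \<forall>e>0. \<exists>b\<in>(\<lambda>\<theta>. Sseq f \<theta> u) ` Qseqs P t. a - vec e \<le> b"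
  proof (intro ballI allI impI)
    fix a and e :: real
    assume "a \<in> (\<lambda>\<pi>. Epart P f \<pi> u) ` Parts t" "0 < e"
    then obtain \<pi> where \<pi>: "\<pi> \<in> Parts t" "a = Epart P f \<pi> u"
      by blast
    define hs where "hs = 0 # increments (sorted_list_of_set \<pi>)"
    have hs: "set hs \<subseteq> {0..t}" "sum_list hs = t" "foldr (Eop P f) hs u = a"
      using increments_Parts[OF \<pi>(1)] assms \<pi>(2) by (auto simp: hs_def Epart_eq_foldr Eop_zero)
    then obtain qss where qss: "length qss = length hs" "\<forall>qs\<in>set qss. \<forall>i. qs i \<in> P"
      "a - vec e \<le> Sseq f (zip qss hs) u"
      using foldr_Eop_approx[of hs e u] \<open>0 < e\<close> by fastforce
    have "zip qss hs \<in> Qseqs P t"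
      unfolding Qseqs_def
    proof (intro CollectI conjI)
      show "zip qss hs \<noteq> []"
        using qss(1) by (simp add: hs_def flip: length_greater_0_conv)
      show "\<forall>(qs, h)\<in>set (zip qss hs). (\<forall>i. qs i \<in> P) \<and> h \<in> {0..t}"
        using qss(2) hs(1) by (auto dest: set_zip_leftD set_zip_rightD)
      show "sum_list (map snd (zip qss hs)) = t"
        using qss(1) hs(2) by simp
    qed
    then show "\<exists>b\<in>(\<lambda>\<theta>. Sseq f \<theta> u) ` Qseqs P t. a - vec e \<le> b"
      using qss(3) by blast
  qed
qed

end

theorem mainTheorem15:
  fixes P :: "(real^'n^'n) set" and f :: "real^'n^'n \<Rightarrow> real^'n"
    and q0 :: "real^'n^'n" and t :: real and u0 :: "real^'n"
  assumes Qm: "\<forall>q\<in>P. is_Qmatrix q"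
    and q0: "q0 \<in> P" and supf: "vsup (f ` P) = f q0" and fq0: "f q0 = 0"
    and fin: "\<forall>u::real^'n. \<forall>i. bdd_above ((\<lambda>q. (q *v u + f q) $ i) ` P)"
    and t: "t \<ge> 0"
  shows "Nisio P f t u0 = vsup ((\<lambda>\<pi>. Epart P f \<pi> u0) ` Parts t)
       \<and> vsup ((\<lambda>\<pi>. Epart P f \<pi> u0) ` Parts t) = vsup ((\<lambda>\<theta>. Sseq f \<theta> u0) ` Qseqs P t)"
proof -
  have "f q \<le> 0" if "q \<in> P" for q
  proof -
    have "bdd_above ((\<lambda>x. x $ i) ` f ` P)" for i
      using fin[rule_format, of 0 i] by (simp add: image_image)
    then have "f q \<le> vsup (f ` P)"
      using that by (intro le_vsup) auto
    then show ?thesis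
      using supf fq0 by simp
  qed
  then interpret Q_control P f
    using Qm q0 by unfold_locales auto
  show ?thesis
    using Sup_Epart_eq_Sup_Sseq[OF t] by (simp add: Nisio_def vsup_eq_Sup)
qed

end
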